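(* Let $\Gamma$ be a countable discrete group and $\mu$ a symmetric, generating probability measure on $\Gamma$. Let $f\in\ell^\infty(\Gamma)$ be real valued with $\|f\|_\infty\le1$ and $f*\mu=-f$, such that $\mathcal P^n_\mu(|f|)$ increases pointwise to $1$ as $n\to\infty$. Then there exists a group homomorphism $\chi:\Gamma\to\{\pm1\}$ with $\chi(h)=-1$ for all $h\in\operatorname{supp}(\mu)$; in particular $\chi*\mu=-\chi$.
   Context: $(f*\mu)(x)=\sum_{h\in\Gamma}\mu(h)f(xh)$, and $\mathcal P^n_\mu(f)(x)=\sum_h\mu^{*n}(h)f(xh)$. $\mu$ symmetric: $\mu(g)=\mu(g^{-1})$; generating: its support generates $\Gamma$ as a group. *)

theory Defs
  imports "HOL-Probability.Probability"
begin

text \<open>The group \<Gamma> is a type of class group_add (written additively: x h becomes x + h,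
  h^-1 becomes - h, identity 0). Probability measures on \<Gamma> are pmfs.\<close>

inductive_set gen_subgroup :: "'g::group_add set \<Rightarrow> 'g set" for S where
  gen_zero: "0 \<in> gen_subgroup S"
| gen_base: "s \<in> S \<Longrightarrow> s \<in> gen_subgroup S"
| gen_add: "a \<in> gen_subgroup S \<Longrightarrow> b \<in> gen_subgroup S \<Longrightarrow> a + b \<in> gen_subgroup S"
| gen_uminus: "a \<in> gen_subgroup S \<Longrightarrow> - a \<in> gen_subgroup S"

definition symmetric_pmf :: "'g::group_add pmf \<Rightarrow> bool" where
  "symmetric_pmf \<mu> \<longleftrightarrow> (\<forall>g. pmf \<mu> g = pmf \<mu> (- g))"

definition generating_pmf :: "'g::group_add pmf \<Rightarrow> bool" where
  "generating_pmf \<mu> \<longleftrightarrow> gen_subgroup (set_pmf \<mu>) = UNIV"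

definition conv_right :: "('g::group_add \<Rightarrow> real) \<Rightarrow> 'g pmf \<Rightarrow> 'g \<Rightarrow> real" where
  "conv_right f \<mu> x = (\<Sum>\<^sub>\<infinity>h. pmf \<mu> h * f (x + h))"

primrec conv_pow :: "'g::group_add pmf \<Rightarrow> nat \<Rightarrow> 'g pmf" where
  "conv_pow \<mu> 0 = return_pmf 0"
| "conv_pow \<mu> (Suc n) = bind_pmf (conv_pow \<mu> n) (\<lambda>a. map_pmf (\<lambda>b. a + b) \<mu>)"

definition markov_pow :: "'g::group_add pmf \<Rightarrow> nat \<Rightarrow> ('g \<Rightarrow> real) \<Rightarrow> 'g \<Rightarrow> real" where
  "markov_pow \<mu> n f x = (\<Sum>\<^sub>\<infinity>h. pmf (conv_pow \<mu> n) h * f (x + h))"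

end

theory Submission
  imports Defs
begin

text \<open>If some word over \<open>supp \<mu>\<close> of odd length sums to \<open>0\<close>, then \<open>f\<close> must vanish: iterating
  \<open>f * \<mu> = - f\<close> along such a word of length \<open>k\<close> and weight \<open>c > 0\<close>, the \<open>k\<close>-fold average of
  \<open>(f + f y)\<^sup>2\<close> at \<open>y\<close> equals \<open>P\<^sup>k(f\<^sup>2)(y) - f(y)\<^sup>2\<close> and is at least \<open>4 c f(y)\<^sup>2\<close>; taking
  suprema gives \<open>(1 + 4 c) sup f\<^sup>2 \<le> sup f\<^sup>2\<close>. Since \<open>P\<^sup>n|f| \<longrightarrow> 1\<close>, \<open>f \<noteq> 0\<close>, so every word over
  \<open>supp \<mu>\<close> summing to \<open>0\<close> has even length, and the parity of the length of any word
  representing \<open>g\<close> is a well-defined character \<open>\<chi>\<close> of \<open>\<Gamma>\<close> that is \<open>-1\<close> on \<open>supp \<mu>\<close>.\<close>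

lemma pmf_summable_on: "pmf p summable_on A"
proof -
  have "Infinite_Sum.abs_summable_on (pmf p) A"
    using abs_summable_equivalent pmf_abs_summable by blast
  then show ?thesis
    by simp
qed

lemma infsum_pmf_cmult: "(\<Sum>\<^sub>\<infinity>h. pmf p h * c) = c"
  using infsetsum_infsum[OF pmf_abs_summable, of p UNIV] infsetsum_pmf_eq_1[of p UNIV]
  by (simp add: infsum_cmult_left')

lemma summable_on_pmf_mult_bounded:
  fixes g :: "'a \<Rightarrow> real"
  assumes "\<And>h. \<bar>g h\<bar> \<le> C"
  shows "(\<lambda>h. pmf p h * g h) summable_on A"
proof -
  have "(\<lambda>h. \<bar>pmf p h * g h\<bar>) summable_on A"
  proof (rule summable_on_comparison_test)
    show "(\<lambda>h. C * pmf p h) summable_on A"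
      using summable_on_cmult_right[OF pmf_summable_on] by blast
    show "\<bar>pmf p h * g h\<bar> \<le> C * pmf p h" for h
      using mult_left_mono[OF assms[of h] pmf_nonneg[of p h]] by (simp add: abs_mult mult.commute)
  qed simp
  then show ?thesis
    using summable_on_iff_abs_summable_on_real by auto
qed

lemma conv_right_between:
  assumes "\<And>y. A \<le> g y \<and> g y \<le> B"
  shows "A \<le> conv_right g p x \<and> conv_right g p x \<le> B"
proof -
  have "\<bar>g y\<bar> \<le> max \<bar>A\<bar> \<bar>B\<bar>" for y
    using assms[of y] by auto
  then have summable: "(\<lambda>h. pmf p h * g (x + h)) summable_on UNIV"
    by (rule summable_on_pmf_mult_bounded)
  have summable_const: "(\<lambda>h. pmf p h * c) summable_on UNIV" for c :: real
    by (rule summable_on_pmf_mult_bounded) (rule order.refl)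
  have "(\<Sum>\<^sub>\<infinity>h. pmf p h * A) \<le> conv_right g p x" "conv_right g p x \<le> (\<Sum>\<^sub>\<infinity>h. pmf p h * B)"
    unfolding conv_right_def using assms
    by (intro infsum_mono summable summable_const mult_left_mono; simp)+
  then show ?thesis
    by (simp add: infsum_pmf_cmult)
qed

lemma conv_right_cmult: "conv_right (\<lambda>y. c * g y) p x = c * conv_right g p x"
  unfolding conv_right_def by (simp add: mult.left_commute infsum_cmult_right')

lemma conv_right_linear:
  assumes "\<And>y. \<bar>g\<^sub>1 y\<bar> \<le> C\<^sub>1" "\<And>y. \<bar>g\<^sub>2 y\<bar> \<le> C\<^sub>2"
  shows "conv_right (\<lambda>y. g\<^sub>1 y + a * g\<^sub>2 y + c) p x = conv_right g\<^sub>1 p x + a * conv_right g\<^sub>2 p x + c"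
proof -
  have s\<^sub>1: "(\<lambda>h. pmf p h * g\<^sub>1 (x + h)) summable_on UNIV"
    using assms(1) by (rule summable_on_pmf_mult_bounded)
  have s\<^sub>2: "(\<lambda>h. pmf p h * (a * g\<^sub>2 (x + h))) summable_on UNIV"
    using assms(2) by (intro summable_on_pmf_mult_bounded[where C = "\<bar>a\<bar> * C\<^sub>2"])
      (simp add: abs_mult mult_left_mono)
  have s\<^sub>3: "(\<lambda>h. pmf p h * c) summable_on UNIV"
    by (rule summable_on_pmf_mult_bounded) (rule order.refl)
  have "conv_right (\<lambda>y. g\<^sub>1 y + a * g\<^sub>2 y + c) p x
      = (\<Sum>\<^sub>\<infinity>h. pmf p h * g\<^sub>1 (x + h) + pmf p h * (a * g\<^sub>2 (x + h)) + pmf p h * c)"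
    unfolding conv_right_def by (simp add: distrib_left)
  also have "\<dots> = conv_right g\<^sub>1 p x + conv_right (\<lambda>y. a * g\<^sub>2 y) p x + c"
    unfolding conv_right_def
    by (simp add: infsum_add summable_on_add s\<^sub>1 s\<^sub>2 s\<^sub>3 infsum_pmf_cmult)
  finally show ?thesis
    by (simp add: conv_right_cmult)
qed

lemma pmf_mult_le_conv_right:
  assumes "\<And>y. 0 \<le> g y \<and> g y \<le> B"
  shows "pmf p s * g (x + s) \<le> conv_right g p x"
proof -
  have "\<bar>g y\<bar> \<le> B" for y
    using assms[of y] by simp
  then have "(\<lambda>h. pmf p h * g (x + h)) summable_on A" for A
    by (rule summable_on_pmf_mult_bounded)
  then have "(\<Sum>\<^sub>\<infinity>h\<in>{s}. pmf p h * g (x + h)) \<le> (\<Sum>\<^sub>\<infinity>h. pmf p h * g (x + h))"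
    by (intro infsum_mono_neutral) (simp_all add: assms)
  then show ?thesis
    unfolding conv_right_def by simp
qed

abbreviation conv_right_iter :: "'g::group_add pmf \<Rightarrow> nat \<Rightarrow> ('g \<Rightarrow> real) \<Rightarrow> 'g \<Rightarrow> real" where
  "conv_right_iter p k \<equiv> (\<lambda>g. conv_right g p) ^^ k"

lemma conv_right_iter_between:
  assumes "\<And>y. A \<le> g y \<and> g y \<le> B"
  shows "A \<le> conv_right_iter p k g x \<and> conv_right_iter p k g x \<le> B"
proof (induction k arbitrary: x)
  case (Suc k)
  then show ?case
    using conv_right_between[of A "conv_right_iter p k g" B] by simp
qed (simp add: assms)

lemma conv_right_iter_abs_le:
  assumes "\<And>y. \<bar>g y\<bar> \<le> C"
  shows "\<bar>conv_right_iter p k g x\<bar> \<le> C"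
proof -
  have "- C \<le> g y \<and> g y \<le> C" for y
    using assms[of y] by linarith
  then have "- C \<le> conv_right_iter p k g x \<and> conv_right_iter p k g x \<le> C"
    by (rule conv_right_iter_between)
  then show ?thesis
    by linarith
qed

lemma conv_right_iter_linear:
  assumes "\<And>y. \<bar>g\<^sub>1 y\<bar> \<le> C\<^sub>1" "\<And>y. \<bar>g\<^sub>2 y\<bar> \<le> C\<^sub>2"
  shows "conv_right_iter p k (\<lambda>y. g\<^sub>1 y + a * g\<^sub>2 y + c) x
       = conv_right_iter p k g\<^sub>1 x + a * conv_right_iter p k g\<^sub>2 x + c"
proof (induction k arbitrary: x)
  case (Suc k)
  then have "conv_right_iter p k (\<lambda>y. g\<^sub>1 y + a * g\<^sub>2 y + c)
           = (\<lambda>y. conv_right_iter p k g\<^sub>1 y + a * conv_right_iter p k g\<^sub>2 y + c)"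
    by blast
  then show ?case
    using conv_right_linear[OF conv_right_iter_abs_le[OF assms(1)] conv_right_iter_abs_le[OF assms(2)]]
    by simp
qed simp

lemma conv_right_iter_eigen_neg_one:
  assumes "conv_right f p = (\<lambda>x. - f x)"
  shows "conv_right_iter p k f = (\<lambda>x. (-1) ^ k * f x)"
  by (induction k) (simp_all add: conv_right_cmult assms)

lemma word_weight_le_conv_right_iter:
  assumes "\<And>y. 0 \<le> g y \<and> g y \<le> B"
  shows "prod_list (map (pmf p) ws) * g (x + sum_list ws) \<le> conv_right_iter p (length ws) g x"
proof (induction ws arbitrary: x)
  case (Cons s ws)
  have "prod_list (map (pmf p) (s # ws)) * g (x + sum_list (s # ws))
      = pmf p s * (prod_list (map (pmf p) ws) * g ((x + s) + sum_list ws))"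
    by (simp add: add.assoc)
  also have "\<dots> \<le> pmf p s * conv_right_iter p (length ws) g (x + s)"
    by (rule mult_left_mono[OF Cons pmf_nonneg])
  also have "\<dots> \<le> conv_right (conv_right_iter p (length ws) g) p x"
    by (rule pmf_mult_le_conv_right) (use conv_right_iter_between assms in blast)
  finally show ?case
    by simp
qed simp

lemma eigen_neg_one_vanishes_if_odd_closed_word:
  fixes f :: "'g::group_add \<Rightarrow> real"
  assumes f_bounded: "\<And>x. \<bar>f x\<bar> \<le> C"
    and f_eigen: "conv_right f p = (\<lambda>x. - f x)"
    and ws: "set ws \<subseteq> set_pmf p" "sum_list ws = 0" "odd (length ws)"
  shows "f = (\<lambda>_. 0)"
proof -
  define k where "k = length ws"
  define c where "c = prod_list (map (pmf p) ws)"
  define M where "M = (SUP y. f y ^ 2)"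
  have c_pos: "c > 0"
    unfolding c_def using ws(1) by (induction ws) (auto simp: set_pmf_eq' less_le)
  have sq_bounds: "0 \<le> f y ^ 2 \<and> f y ^ 2 \<le> C ^ 2" for y
    using f_bounded[of y] abs_le_square_iff[of "f y" C] by simp
  have le_M: "f y ^ 2 \<le> M" for y
    unfolding M_def using sq_bounds by (intro cSUP_upper bdd_aboveI[of _ "C ^ 2"]) auto
  have improved: "f y ^ 2 * (1 + 4 * c) \<le> M" for y
  proof -
    define G where "G z = (f z + f y) ^ 2" for z
    have G_bounds: "0 \<le> G z \<and> G z \<le> (2 * C) ^ 2" for z
    proof -
      have "\<bar>f z + f y\<bar> \<le> \<bar>2 * C\<bar>"
        using f_bounded[of z] f_bounded[of y] by linarith
      then show ?thesis
        unfolding G_def abs_le_square_iff by simp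
    qed
    have "c * (4 * f y ^ 2) = c * G (y + sum_list ws)"
      using ws(2) by (simp add: G_def power2_eq_square algebra_simps)
    also have "\<dots> \<le> conv_right_iter p k G y"
      unfolding c_def k_def by (rule word_weight_le_conv_right_iter[OF G_bounds])
    also have "G = (\<lambda>z. f z ^ 2 + (2 * f y) * f z + f y ^ 2)"
      unfolding G_def by (simp add: power2_eq_square algebra_simps)
    also have "conv_right_iter p k \<dots> y
        = conv_right_iter p k (\<lambda>z. f z ^ 2) y + (2 * f y) * conv_right_iter p k f y + f y ^ 2"
      by (rule conv_right_iter_linear) (use sq_bounds f_bounded in auto)
    also have "conv_right_iter p k f y = - f y"
      using ws(3) by (simp add: conv_right_iter_eigen_neg_one[OF f_eigen] k_def)
    also have "conv_right_iter p k (\<lambda>z. f z ^ 2) y \<le> M"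
      using conv_right_iter_between[of 0 "\<lambda>z. f z ^ 2" M] sq_bounds le_M by blast
    finally show ?thesis
      by (simp add: algebra_simps power2_eq_square)
  qed
  have "(SUP y. f y ^ 2) \<le> M / (1 + 4 * c)"
    by (rule cSUP_least) (use improved c_pos in \<open>auto simp: pos_le_divide_eq\<close>)
  then have "M * (1 + 4 * c) \<le> M"
    using c_pos by (simp add: M_def[symmetric] pos_le_divide_eq)
  then have "M \<le> 0"
    using c_pos by (simp add: algebra_simps mult_le_0_iff)
  then have "f y ^ 2 \<le> 0" for y
    using le_M[of y] by linarith
  then show ?thesis
    by auto
qed

lemma sum_list_map_uminus_rev: "sum_list (map uminus (rev ws)) = - sum_list (ws :: 'g::group_add list)"
  by (induction ws) (simp_all add: minus_add)

lemma gen_subgroup_obtain_word: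
  assumes "uminus ` S \<subseteq> S" "g \<in> gen_subgroup S"
  obtains ws where "set ws \<subseteq> S" "sum_list ws = g"
proof -
  have "\<exists>ws. set ws \<subseteq> S \<and> sum_list ws = g"
    using assms(2)
  proof induction
    case gen_zero
    show ?case by (intro exI[of _ "[]"]) simp
  next
    case (gen_base s)
    then show ?case by (intro exI[of _ "[s]"]) simp
  next
    case (gen_add a b)
    then show ?case by (metis set_append sum_list_append Un_subset_iff)
  next
    case (gen_uminus a)
    then obtain ws where "set ws \<subseteq> S" "sum_list ws = a"
      by blast
    then show ?case
      using assms(1) by (intro exI[of _ "map uminus (rev ws)"]) (auto simp: sum_list_map_uminus_rev)
  qed
  then show ?thesis
    using that by blast
qed

lemma even_length_words_same_sum:
  fixes S :: "'g::group_add set"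
  assumes "uminus ` S \<subseteq> S"
    and closed_even: "\<And>ws. set ws \<subseteq> S \<Longrightarrow> sum_list ws = 0 \<Longrightarrow> even (length ws)"
    and "set xs \<subseteq> S" "set ys \<subseteq> S" "sum_list xs = sum_list ys"
  shows "even (length xs) \<longleftrightarrow> even (length ys)"
proof -
  have "even (length (xs @ map uminus (rev ys)))"
    using assms by (intro closed_even) (auto simp: sum_list_map_uminus_rev image_subset_iff)
  then show ?thesis
    by simp
qed

lemma parity_character_exists:
  fixes S :: "'g::group_add set"
  assumes symmetric: "uminus ` S \<subseteq> S" and generating: "gen_subgroup S = UNIV"
    and closed_even: "\<And>ws. set ws \<subseteq> S \<Longrightarrow> sum_list ws = 0 \<Longrightarrow> even (length ws)"
  shows "\<exists>chi :: 'g \<Rightarrow> real. (\<forall>g. chi g \<in> {-1, 1})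
           \<and> (\<forall>a b. chi (a + b) = chi a * chi b) \<and> (\<forall>s \<in> S. chi s = -1)"
proof -
  define chi :: "'g \<Rightarrow> real" where
    "chi g = (if \<exists>ws. set ws \<subseteq> S \<and> sum_list ws = g \<and> even (length ws) then 1 else -1)" for g
  have chi_word: "chi (sum_list ws) = (-1) ^ length ws" if "set ws \<subseteq> S" for ws
  proof -
    have "(\<exists>vs. set vs \<subseteq> S \<and> sum_list vs = sum_list ws \<and> even (length vs)) \<longleftrightarrow> even (length ws)"
      using that even_length_words_same_sum[OF symmetric closed_even _ that] by metis
    then show ?thesis
      by (simp add: chi_def)
  qed
  have "chi g \<in> {-1, 1}" for g
    by (simp add: chi_def)
  moreover have "chi (a + b) = chi a * chi b" for a b
  proof -
    obtain xs ys where "set xs \<subseteq> S" "sum_list xs = a" "set ys \<subseteq> S" "sum_list ys = b"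
      using gen_subgroup_obtain_word[OF symmetric, of a] gen_subgroup_obtain_word[OF symmetric, of b]
      by (metis generating UNIV_I)
    then show ?thesis
      using chi_word[of "xs @ ys"] chi_word[of xs] chi_word[of ys] by (simp add: power_add)
  qed
  moreover have "chi s = -1" if "s \<in> S" for s
    using chi_word[of "[s]"] that by simp
  ultimately show ?thesis
    by blast
qed

lemma conv_right_eq_neg_if_flips_on_support:
  assumes "\<And>x h. h \<in> set_pmf p \<Longrightarrow> chi (x + h) = - chi x"
  shows "conv_right chi p = (\<lambda>x. - chi x)"
proof
  fix x
  have "conv_right chi p x = (\<Sum>\<^sub>\<infinity>h. pmf p h * (- chi x))"
    unfolding conv_right_def
    by (intro infsum_cong) (metis assms mult_eq_0_iff set_pmf_iff)
  then show "conv_right chi p x = - chi x"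
    using infsum_pmf_cmult[of p "- chi x"] by simp
qed

lemma symmetric_pmf_uminus_set_pmf: "symmetric_pmf \<mu> \<Longrightarrow> uminus ` set_pmf \<mu> \<subseteq> set_pmf \<mu>"
  by (auto simp: symmetric_pmf_def set_pmf_iff)

theorem theorem4p4:
  fixes \<mu> :: "'g::{group_add, countable} pmf" and f :: "'g \<Rightarrow> real"
  assumes "symmetric_pmf \<mu>" and "generating_pmf \<mu>"
    and "\<forall>x. \<bar>f x\<bar> \<le> 1"
    and "conv_right f \<mu> = (\<lambda>x. - f x)"
    and "\<forall>x. incseq (\<lambda>n. markov_pow \<mu> n (\<lambda>y. \<bar>f y\<bar>) x)"
    and "\<forall>x. (\<lambda>n. markov_pow \<mu> n (\<lambda>y. \<bar>f y\<bar>) x) \<longlonglongrightarrow> 1"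
  shows "\<exists>chi :: 'g \<Rightarrow> real. (\<forall>g. chi g \<in> {-1, 1})
           \<and> (\<forall>a b. chi (a + b) = chi a * chi b)
           \<and> (\<forall>h \<in> set_pmf \<mu>. chi h = -1)
           \<and> conv_right chi \<mu> = (\<lambda>x. - chi x)"
proof -
  have f_nonzero: "f \<noteq> (\<lambda>_. 0)"
  proof
    assume "f = (\<lambda>_. 0)"
    then have "(\<lambda>n. 0 :: real) \<longlonglongrightarrow> 1"
      using assms(6) by (simp add: markov_pow_def)
    then show False
      by (simp add: LIMSEQ_const_iff)
  qed
  have "even (length ws)" if "set ws \<subseteq> set_pmf \<mu>" "sum_list ws = 0" for ws
    using eigen_neg_one_vanishes_if_odd_closed_word[where C = 1, OF _ assms(4) that] assms(3) f_nonzero by blast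
  then obtain chi :: "'g \<Rightarrow> real" where chi: "\<forall>g. chi g \<in> {-1, 1}"
      "\<forall>a b. chi (a + b) = chi a * chi b" "\<forall>h \<in> set_pmf \<mu>. chi h = -1"
    using parity_character_exists[OF symmetric_pmf_uminus_set_pmf[OF assms(1)]] assms(2)
    unfolding generating_pmf_def by blast
  then have "conv_right chi \<mu> = (\<lambda>x. - chi x)"
    by (intro conv_right_eq_neg_if_flips_on_support) simp
  with chi show ?thesis
    by blast
qed

end
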